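(* Let $q$ be an odd prime power and $d\ge 2$. Let $V$ be a $(2d+1)$-dimensional vector space over $\mathbb{F}_q$ with basis $z,e_0,f_0,x,y,e_1,f_1,\dots,e_{d-2},f_{d-2}$ and nondegenerate symmetric bilinear form $\beta$ with $V=\langle z\rangle\perp\langle e_0,f_0\rangle\perp\langle x,y\rangle\perp\langle e_1,f_1\rangle\perp\cdots\perp\langle e_{d-2},f_{d-2}\rangle$, $\beta(z,z)=1$, $\beta(e_i,f_i)=1$, $\beta(e_i,e_i)=\beta(f_i,f_i)=0$, and $\langle x,y\rangle$ anisotropic; let $\kappa(v)=\beta(v,v)/2$ and let $\mathcal{Q}(2d,q)$ be the associated parabolic quadric. Let $W=\langle z,e_0,f_0\rangle$, $U=W^\perp$, $B=\{g\oplus 1_U: g\in\Omega(W)\}$ with $\Omega(W)$ the derived subgroup of the orthogonal group of $(W,\kappa|_W)$, let $\tau$ be the linear map with $z\mapsto -z$ fixing all other basis vectors, and $A=\langle B,\tau\rangle$. Then $A$ and $B$ have the same orbits on the points of $\mathcal{Q}(2d,q)$.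
   Context: A point of $\mathcal{Q}(2d,q)$ is a $1$-dimensional subspace of $V$ on which $\kappa$ vanishes. *)

theory Defs
  imports Main "HOL-Algebra.Generated_Groups"
begin

text \<open>Coordinates: V = functions nat => 'a supported on {0..<2d+1}.
  Basis order: 0 = z, 1 = e0, 2 = f0, 3 = x, 4 = y,
  2i+3 = e_i, 2i+4 = f_i for 1 <= i <= d-2.
  Matrices are functions nat => nat => 'a supported on {0..<n} x {0..<n}.\<close>

definition vecs :: "nat \<Rightarrow> (nat \<Rightarrow> 'a::zero) set" where
  "vecs n = {v. \<forall>i\<ge>n. v i = 0}"

definition mats :: "nat \<Rightarrow> (nat \<Rightarrow> nat \<Rightarrow> 'a::zero) set" where
  "mats n = {M. \<forall>i j. (n \<le> i \<or> n \<le> j) \<longrightarrow> M i j = 0}"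

definition mv :: "nat \<Rightarrow> (nat \<Rightarrow> nat \<Rightarrow> 'a::comm_ring_1) \<Rightarrow> (nat \<Rightarrow> 'a) \<Rightarrow> (nat \<Rightarrow> 'a)" where
  "mv n M v = (\<lambda>i. if i < n then (\<Sum>j<n. M i j * v j) else 0)"

definition mmul :: "nat \<Rightarrow> (nat \<Rightarrow> nat \<Rightarrow> 'a::comm_ring_1) \<Rightarrow> (nat \<Rightarrow> nat \<Rightarrow> 'a) \<Rightarrow> (nat \<Rightarrow> nat \<Rightarrow> 'a)" where
  "mmul n M N = (\<lambda>i k. if i < n \<and> k < n then (\<Sum>j<n. M i j * N j k) else 0)"

definition idm :: "nat \<Rightarrow> (nat \<Rightarrow> nat \<Rightarrow> 'a::comm_ring_1)" where
  "idm n = (\<lambda>i j. if i = j \<and> i < n then 1 else 0)"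

definition GLn :: "nat \<Rightarrow> (nat \<Rightarrow> nat \<Rightarrow> 'a::comm_ring_1) monoid" where
  "GLn n = \<lparr> carrier = {M \<in> mats n. \<exists>N \<in> mats n. mmul n M N = idm n \<and> mmul n N M = idm n},
             mult = mmul n, one = idm n \<rparr>"

text \<open>Gram matrix of beta w.r.t. the basis; the anisotropic plane <x,y> has Gram matrix [[a,b],[b,c]].\<close>
definition gram :: "'a::comm_ring_1 \<Rightarrow> 'a \<Rightarrow> 'a \<Rightarrow> nat \<Rightarrow> nat \<Rightarrow> 'a" where
  "gram a b c i j =
    (if i = 0 \<and> j = 0 then 1
     else if (i = 1 \<and> j = 2) \<or> (i = 2 \<and> j = 1) then 1
     else if i = 3 \<and> j = 3 then a
     else if (i = 3 \<and> j = 4) \<or> (i = 4 \<and> j = 3) then b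
     else if i = 4 \<and> j = 4 then c
     else if 5 \<le> min i j \<and> odd (min i j) \<and> max i j = min i j + 1 then 1
     else 0)"

definition beta :: "nat \<Rightarrow> 'a::comm_ring_1 \<Rightarrow> 'a \<Rightarrow> 'a \<Rightarrow> (nat \<Rightarrow> 'a) \<Rightarrow> (nat \<Rightarrow> 'a) \<Rightarrow> 'a" where
  "beta n a b c u v = (\<Sum>i<n. \<Sum>j<n. u i * gram a b c i j * v j)"

definition kappa :: "nat \<Rightarrow> 'a::field \<Rightarrow> 'a \<Rightarrow> 'a \<Rightarrow> (nat \<Rightarrow> 'a) \<Rightarrow> 'a" where
  "kappa n a b c v = beta n a b c v v / 2"

definition quadric_points :: "nat \<Rightarrow> 'a::field \<Rightarrow> 'a \<Rightarrow> 'a \<Rightarrow> (nat \<Rightarrow> 'a) set set" where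
  "quadric_points n a b c =
     {P. \<exists>v \<in> vecs n. (\<exists>i. v i \<noteq> 0) \<and> P = {(\<lambda>i. s * v i) | s. True} \<and> (\<forall>w\<in>P. kappa n a b c w = 0)}"

text \<open>W = <z,e0,f0> = span of coordinates 0,1,2. O(W): isometries of (W, kappa|W),
  written as 3x3 matrices w.r.t. the basis z,e0,f0.\<close>
definition OW :: "nat \<Rightarrow> 'a::field \<Rightarrow> 'a \<Rightarrow> 'a \<Rightarrow> (nat \<Rightarrow> nat \<Rightarrow> 'a) monoid" where
  "OW n a b c = \<lparr> carrier = {M \<in> carrier (GLn 3).
                     \<forall>w \<in> vecs 3. kappa n a b c (mv 3 M w) = kappa n a b c w},
                 mult = mmul 3, one = idm 3 \<rparr>"

text \<open>g \<oplus> 1_U, where U = W^perp = span of coordinates 3..2d.\<close>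
definition embedW :: "nat \<Rightarrow> (nat \<Rightarrow> nat \<Rightarrow> 'a::comm_ring_1) \<Rightarrow> (nat \<Rightarrow> nat \<Rightarrow> 'a)" where
  "embedW n g = (\<lambda>i j. if i < 3 \<and> j < 3 then g i j
                       else if i = j \<and> i < n then 1 else 0)"

definition tau :: "nat \<Rightarrow> (nat \<Rightarrow> nat \<Rightarrow> 'a::comm_ring_1)" where
  "tau n = (\<lambda>i j. if i = j \<and> i < n then (if i = 0 then -1 else 1) else 0)"

definition orbit_on :: "nat \<Rightarrow> (nat \<Rightarrow> nat \<Rightarrow> 'a::comm_ring_1) set \<Rightarrow> (nat \<Rightarrow> 'a) set \<Rightarrow> (nat \<Rightarrow> 'a) set set" where
  "orbit_on n S P = {mv n g ` P | g. g \<in> S}"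

end

theory Submission
  imports Defs "HOL-Number_Theory.Residues"
begin

text \<open>The map \<open>\<tau>\<close> is \<open>r\<^sub>z \<oplus> 1\<^sub>U\<close>, where \<open>r\<^sub>z\<close> is the reflection of \<open>W\<close> in \<open>z\<close>.
  Given \<open>w \<in> W\<close>, choose \<open>c \<perp> w\<close> with \<open>\<beta>(c,c) = \<beta>(z,z) = 1\<close> and \<open>d = z + c\<close> anisotropic.
  The reflection \<open>r\<^sub>d\<close> maps \<open>z\<close> to \<open>-c \<perp> w\<close>, so \<open>r\<^sub>d w \<perp> z\<close> is fixed by \<open>r\<^sub>z\<close>, and the
  commutator \<open>r\<^sub>z r\<^sub>d r\<^sub>z r\<^sub>d \<in> \<Omega>(W)\<close> agrees with \<open>r\<^sub>z\<close> on \<open>w\<close>.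
  As \<open>\<Omega>(W)\<close> is normal in \<open>O(W)\<close> and \<open>r\<^sub>z\<^sup>2 = 1\<close>, every element of \<open>A\<close> is \<open>g\<close> or \<open>g \<tau>\<close>
  with \<open>g \<in> B\<close>, and on the point \<open>\<langle>v\<rangle>\<close> the latter acts like \<open>g h \<in> B\<close>, where \<open>h\<close> agrees with
  \<open>\<tau>\<close> on the \<open>W\<close>-component of \<open>v\<close>. This works for every 1-space of \<open>V\<close>.\<close>

lemma mmul_assoc: "mmul n (mmul n A B) C = mmul n A (mmul n B C)"
  unfolding mmul_def
  by (intro ext) (auto simp: sum_distrib_left sum_distrib_right mult.assoc intro: sum.swap)

lemma mmul_in_mats: "mmul n A B \<in> mats n"
  by (auto simp: mmul_def mats_def)

lemma idm_in_mats: "idm n \<in> mats n"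
  by (auto simp: idm_def mats_def)

lemma mmul_idm_left: "M \<in> mats n \<Longrightarrow> mmul n (idm n) M = M"
  by (intro ext) (auto simp: mmul_def idm_def mats_def if_distrib[of "\<lambda>x. x * _"] cong: if_cong)

lemma mmul_idm_right: "M \<in> mats n \<Longrightarrow> mmul n M (idm n) = M"
  by (intro ext) (auto simp: mmul_def idm_def mats_def if_distrib[of "\<lambda>x. _ * x"] cong: if_cong)

lemma mv_mmul: "mv n (mmul n M N) x = mv n M (mv n N x)"
  unfolding mv_def mmul_def
  by (intro ext) (auto simp: sum_distrib_left sum_distrib_right mult.assoc intro: sum.swap)

lemma mv_in_vecs: "mv n M x \<in> vecs n"
  by (auto simp: mv_def vecs_def)

lemma mv_idm: "x \<in> vecs n \<Longrightarrow> mv n (idm n) x = x"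
  by (intro ext) (auto simp: mv_def idm_def vecs_def if_distrib[of "\<lambda>y. y * _"] cong: if_cong)

lemma mv_scale: "mv n M (\<lambda>i. s * v i) = (\<lambda>i. s * mv n M v i)"
  by (intro ext) (auto simp: mv_def sum_distrib_left algebra_simps)

lemma mv_cong: "(\<And>j. j < n \<Longrightarrow> x j = y j) \<Longrightarrow> mv n M x = mv n M y"
  unfolding mv_def by (intro ext) (auto intro: sum.cong)

lemma mats_eqI:
  assumes "M \<in> mats n" "N \<in> mats n" "\<And>x. x \<in> vecs n \<Longrightarrow> mv n M x = mv n N x"
  shows "M = N"
proof (intro ext)
  fix i j
  show "M i j = N i j"
  proof (cases "i < n \<and> j < n")
    case True
    define e where "e = (\<lambda>k. if k = j then 1 else 0 :: 'a)"
    have "e \<in> vecs n" using True by (simp add: e_def vecs_def)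
    then have "mv n M e i = mv n N e i" using assms(3) by simp
    then show ?thesis using True by (simp add: mv_def e_def if_distrib[of "\<lambda>x. _ * x"] cong: if_cong)
  next
    case False
    then show ?thesis using assms(1,2) by (auto simp: mats_def)
  qed
qed

definition mat_monoid :: "nat \<Rightarrow> (nat \<Rightarrow> nat \<Rightarrow> 'a::comm_ring_1) monoid" where
  "mat_monoid n = \<lparr>carrier = mats n, monoid.mult = mmul n, one = idm n\<rparr>"

lemma monoid_mat_monoid: "monoid (mat_monoid n)"
  by unfold_locales
    (simp_all add: mat_monoid_def mmul_in_mats idm_in_mats mmul_assoc mmul_idm_left mmul_idm_right)

lemma GLn_eq_units_of: "GLn n = units_of (mat_monoid n)"
  unfolding GLn_def units_of_def Units_def mat_monoid_def by auto

lemma group_GLn: "group (GLn n)"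
  unfolding GLn_eq_units_of by (rule monoid.units_group[OF monoid_mat_monoid])

lemma GLn_mult [simp]: "x \<otimes>\<^bsub>GLn n\<^esub> y = mmul n x y"
  by (simp add: GLn_def)

lemma GLn_one [simp]: "\<one>\<^bsub>GLn n\<^esub> = idm n"
  by (simp add: GLn_def)

lemma subgroup_GLn_isometries:
  "subgroup {M \<in> carrier (GLn m). \<forall>w \<in> vecs m. f (mv m M w) = f w} (GLn m)"
    (is "subgroup ?I _")
proof -
  interpret GL: group "GLn m" by (rule group_GLn)
  show ?thesis
  proof (rule GL.subgroupI)
    fix M assume M: "M \<in> ?I"
    have "f (mv m (inv\<^bsub>GLn m\<^esub> M) w) = f w" if "w \<in> vecs m" for w
    proof -
      have "f (mv m (inv\<^bsub>GLn m\<^esub> M) w) = f (mv m M (mv m (inv\<^bsub>GLn m\<^esub> M) w))"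
        using M mv_in_vecs[of m "inv\<^bsub>GLn m\<^esub> M" w] by simp
      also have "\<dots> = f w"
        using M GL.r_inv[of M] that by (simp flip: mv_mmul add: mv_idm)
      finally show ?thesis .
    qed
    then show "inv\<^bsub>GLn m\<^esub> M \<in> ?I"
      using M by simp
  next
    fix M N assume "M \<in> ?I" "N \<in> ?I"
    then show "M \<otimes>\<^bsub>GLn m\<^esub> N \<in> ?I"
      using GL.m_closed[of M N] by (auto simp: mv_mmul mv_in_vecs)
  qed (auto simp: mv_idm)
qed

lemma OW_mult [simp]: "x \<otimes>\<^bsub>OW n a b c\<^esub> y = mmul 3 x y"
  by (simp add: OW_def)

lemma OW_one [simp]: "\<one>\<^bsub>OW n a b c\<^esub> = idm 3"
  by (simp add: OW_def)

lemma OW_eq: "OW n a b c = (GLn 3)\<lparr>carrier := carrier (OW n a b c)\<rparr>"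
  by (simp add: OW_def GLn_def)

lemma group_OW: "group (OW n a b c)"
  by (subst OW_eq, rule group.subgroup_imp_group[OF group_GLn])
    (simp add: OW_def subgroup_GLn_isometries)

definition beta_W :: "(nat \<Rightarrow> 'a::comm_ring_1) \<Rightarrow> (nat \<Rightarrow> 'a) \<Rightarrow> 'a" where
  "beta_W x y = x 0 * y 0 + x 1 * y 2 + x 2 * y 1"

lemma sum_lessThan_3: "(\<Sum>j<3. f j) = f 0 + f 1 + f (2::nat)"
  by (simp add: eval_nat_numeral add.commute add.left_commute)

lemma sum_lessThan_supported_3:
  assumes "3 \<le> n" "\<And>j. 3 \<le> j \<Longrightarrow> f j = 0"
  shows "(\<Sum>j<n. f j) = f 0 + f 1 + f (2::nat)"
proof -
  have "(\<Sum>j<n. f j) = (\<Sum>j<3. f j)"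
    using assms by (intro sum.mono_neutral_right) auto
  then show ?thesis by (simp add: sum_lessThan_3)
qed

lemma beta_eq_beta_W:
  assumes "x \<in> vecs 3" "y \<in> vecs 3" "3 \<le> n"
  shows "beta n a b c x y = beta_W x y"
proof -
  have x: "x j = 0" and y: "y j = 0" if "3 \<le> j" for j
    using assms that by (auto simp: vecs_def)
  have "beta n a b c x y = (\<Sum>i<n. x i * gram a b c i 0 * y 0 + x i * gram a b c i 1 * y 1 + x i * gram a b c i 2 * y 2)"
    unfolding beta_def by (intro sum.cong refl sum_lessThan_supported_3) (auto simp: assms y)
  also have "\<dots> = beta_W x y"
    by (subst sum_lessThan_supported_3) (auto simp: assms x gram_def beta_W_def algebra_simps)
  finally show ?thesis .
qed

lemma kappa_eq_beta_W:
  assumes "x \<in> vecs 3" "3 \<le> n"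
  shows "kappa n a b c x = beta_W x x / 2"
  using beta_eq_beta_W[OF assms(1,1,2)] by (simp add: kappa_def)

definition reflection_W :: "(nat \<Rightarrow> 'a::field) \<Rightarrow> (nat \<Rightarrow> 'a) \<Rightarrow> nat \<Rightarrow> 'a" where
  "reflection_W d x = (\<lambda>i. if i < 3 then x i - 2 * beta_W x d / beta_W d d * d i else 0)"

definition reflection_matrix :: "(nat \<Rightarrow> 'a::field) \<Rightarrow> nat \<Rightarrow> nat \<Rightarrow> 'a" where
  "reflection_matrix d = (\<lambda>i j. if j < 3 then reflection_W d (\<lambda>k. if k = j then 1 else 0) i else 0)"

lemma mv_3_eq: "mv 3 M x = (\<lambda>i. if i < 3 then M i 0 * x 0 + M i 1 * x 1 + M i 2 * x 2 else 0)"
  unfolding mv_def sum_lessThan_3 ..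

lemma mv_reflection_matrix: "mv 3 (reflection_matrix d) x = reflection_W d x"
proof (intro ext)
  fix i
  show "mv 3 (reflection_matrix d) x i = reflection_W d x i"
  proof (cases "i < 3")
    case True
    then consider "i = 0" | "i = 1" | "i = 2" by linarith
    then show ?thesis
      by cases (simp_all add: mv_3_eq reflection_matrix_def reflection_W_def beta_W_def
          add_divide_distrib diff_divide_distrib algebra_simps)
  qed (simp add: mv_3_eq reflection_W_def)
qed

lemma reflection_W_in_vecs: "reflection_W d x \<in> vecs 3"
  by (simp add: reflection_W_def vecs_def)

lemma beta_W_reflection_W:
  assumes "beta_W d d \<noteq> 0"
  shows "beta_W (reflection_W d x) (reflection_W d x) = beta_W x x"
proof -
  define s where "s = 2 * beta_W x d / beta_W d d"
  have "beta_W (reflection_W d x) (reflection_W d x) = beta_W (\<lambda>i. x i - s * d i) (\<lambda>i. x i - s * d i)"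
    by (simp add: reflection_W_def beta_W_def s_def)
  also have "\<dots> = beta_W x x - 2 * s * beta_W x d + s\<^sup>2 * beta_W d d"
    by (simp add: beta_W_def algebra_simps power2_eq_square)
  also have "\<dots> = beta_W x x"
    using assms by (simp add: s_def power2_eq_square)
  finally show ?thesis .
qed

lemma reflection_W_involutive:
  assumes "beta_W d d \<noteq> 0" "x \<in> vecs 3"
  shows "reflection_W d (reflection_W d x) = x"
proof -
  define s where "s = 2 * beta_W x d / beta_W d d"
  have "beta_W (reflection_W d x) d = beta_W (\<lambda>i. x i - s * d i) d"
    by (simp add: reflection_W_def beta_W_def s_def)
  also have "\<dots> = beta_W x d - s * beta_W d d"
    by (simp add: beta_W_def algebra_simps)
  also have "\<dots> = - beta_W x d"
    using assms(1) by (simp add: s_def)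
  finally have "beta_W (reflection_W d x) d = - beta_W x d" .
  then show ?thesis
    using assms by (intro ext) (auto simp: reflection_W_def[of d "reflection_W d x"] vecs_def,
        auto simp: reflection_W_def)
qed

lemma reflection_matrix_in_mats: "reflection_matrix d \<in> mats 3"
  by (auto simp: reflection_matrix_def reflection_W_def mats_def)

lemma reflection_matrix_square:
  assumes "beta_W d d \<noteq> 0"
  shows "mmul 3 (reflection_matrix d) (reflection_matrix d) = idm 3"
  by (rule mats_eqI[of _ 3])
    (simp_all add: mmul_in_mats idm_in_mats mv_mmul mv_idm mv_reflection_matrix
      reflection_W_in_vecs reflection_W_involutive assms)

lemma reflection_matrix_in_OW:
  assumes "beta_W d d \<noteq> 0" "3 \<le> n"
  shows "reflection_matrix d \<in> carrier (OW n a b c)"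
proof -
  have "kappa n a b c (mv 3 (reflection_matrix d) w) = kappa n a b c w" if "w \<in> vecs 3" for w
    using that assms by (simp add: mv_reflection_matrix kappa_eq_beta_W reflection_W_in_vecs
        beta_W_reflection_W)
  then show ?thesis
    using reflection_matrix_square[OF assms(1)] reflection_matrix_in_mats
    by (auto simp: OW_def GLn_def)
qed

lemma inv_reflection_matrix:
  assumes "beta_W d d \<noteq> 0" "3 \<le> n"
  shows "inv\<^bsub>OW n a b c\<^esub> reflection_matrix d = reflection_matrix d"
  by (intro group.inv_equality[OF group_OW])
    (simp_all add: reflection_matrix_square reflection_matrix_in_OW assms)

definition z_W :: "nat \<Rightarrow> 'a::comm_ring_1" where
  "z_W = (\<lambda>i. if i = 0 then 1 else 0)"

lemma beta_W_z_W: "beta_W x z_W = x 0"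
  by (simp add: beta_W_def z_W_def)

lemma z_W_anisotropic: "beta_W z_W z_W \<noteq> (0::'a::comm_ring_1)"
  by (simp add: beta_W_def z_W_def)

lemma tau_3_eq_reflection_matrix: "tau 3 = reflection_matrix z_W"
  by (intro ext) (auto simp: tau_def reflection_matrix_def reflection_W_def beta_W_def z_W_def)

lemma tau_3_in_OW: "3 \<le> n \<Longrightarrow> tau 3 \<in> carrier (OW n a b c)"
  unfolding tau_3_eq_reflection_matrix
  by (rule reflection_matrix_in_OW[OF z_W_anisotropic])

lemma tau_3_square: "mmul 3 (tau 3) (tau 3) = (idm 3 :: nat \<Rightarrow> nat \<Rightarrow> 'a::field)"
  unfolding tau_3_eq_reflection_matrix
  by (rule reflection_matrix_square[OF z_W_anisotropic])

lemma reflection_z_W_fixes: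
  assumes "x \<in> vecs 3" "x 0 = 0"
  shows "reflection_W z_W x = x"
  using assms by (intro ext) (auto simp: reflection_W_def beta_W_z_W vecs_def)

lemma exists_unit_orthogonal_W:
  assumes "(2::'a::field) \<noteq> 0"
  shows "\<exists>c::nat \<Rightarrow> 'a. beta_W c c = 1 \<and> beta_W w c = 0 \<and> c 0 + 1 \<noteq> 0"
proof (cases "w 2 = 0")
  case False
  show ?thesis
    by (rule exI[of _ "\<lambda>i. if i = 0 then 1 else if i = 1 then - w 0 / w 2 else 0"])
      (use False assms in \<open>simp add: beta_W_def field_simps\<close>)
next
  case w2: True
  show ?thesis
  proof (cases "w 1 = 0")
    case False
    show ?thesis
      by (rule exI[of _ "\<lambda>i. if i = 0 then 1 else if i = 2 then - w 0 / w 1 else 0"])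
        (use False assms in \<open>simp add: beta_W_def field_simps\<close>)
  next
    case True
    show ?thesis
      by (rule exI[of _ "\<lambda>i. if i = 0 then 0 else if i = 1 then 1 else 1 / 2"])
        (use True w2 assms in \<open>simp add: beta_W_def field_simps\<close>)
  qed
qed

lemma exists_reflection_into_z_perp:
  assumes "(2::'a::field) \<noteq> 0"
  shows "\<exists>d. beta_W d d \<noteq> 0 \<and> reflection_W d (w :: nat \<Rightarrow> 'a) 0 = 0"
proof -
  obtain c :: "nat \<Rightarrow> 'a" where c: "beta_W c c = 1" "beta_W w c = 0" "c 0 + 1 \<noteq> 0"
    using exists_unit_orthogonal_W[OF assms] by blast
  define d where "d = (\<lambda>i. z_W i + c i)"
  define e where "e = c 0 + 1"
  have dd: "beta_W d d = 2 * e"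
    using c(1) by (simp add: d_def e_def z_W_def beta_W_def algebra_simps)
  have wd: "beta_W w d = w 0"
    using c(2) by (simp add: d_def z_W_def beta_W_def algebra_simps)
  have "d 0 = e"
    by (simp add: d_def e_def z_W_def)
  then have "reflection_W d w 0 = w 0 - 2 * w 0 / (2 * e) * e"
    by (simp add: reflection_W_def dd wd)
  also have "\<dots> = 0"
    using assms c(3) by (simp add: e_def[symmetric])
  finally have "reflection_W d w 0 = 0" .
  moreover have "beta_W d d \<noteq> 0"
    using assms c(3) unfolding dd e_def by (rule no_zero_divisors)
  ultimately show ?thesis by blast
qed

lemma derived_OW_acts_as_tau:
  assumes "(2::'a::field) \<noteq> 0" "3 \<le> n" "w \<in> vecs 3"
  shows "\<exists>g \<in> derived (OW n a b c) (carrier (OW n a b c)). mv 3 g w = mv 3 (tau 3) (w :: nat \<Rightarrow> 'a)"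
proof -
  obtain d :: "nat \<Rightarrow> 'a" where d: "beta_W d d \<noteq> 0" "reflection_W d w 0 = 0"
    using exists_reflection_into_z_perp[OF assms(1)] by blast
  define T where "T = (reflection_matrix z_W :: nat \<Rightarrow> nat \<Rightarrow> 'a)"
  define R where "R = reflection_matrix d"
  have TR: "T \<in> carrier (OW n a b c)" "R \<in> carrier (OW n a b c)"
    unfolding T_def R_def using reflection_matrix_in_OW z_W_anisotropic d(1) assms(2) by blast+
  define g where "g = T \<otimes>\<^bsub>OW n a b c\<^esub> R \<otimes>\<^bsub>OW n a b c\<^esub> inv\<^bsub>OW n a b c\<^esub> T
    \<otimes>\<^bsub>OW n a b c\<^esub> inv\<^bsub>OW n a b c\<^esub> R"
  have g: "g \<in> derived (OW n a b c) (carrier (OW n a b c))"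
    unfolding derived_def g_def using TR by (blast intro: generate.incl)
  have "mv 3 g w = reflection_W z_W (reflection_W d (reflection_W z_W (reflection_W d w)))"
    using inv_reflection_matrix[OF z_W_anisotropic[where 'a = 'a] assms(2)] inv_reflection_matrix[OF d(1) assms(2)]
    by (simp add: g_def T_def R_def mv_mmul mv_reflection_matrix)
  also have "\<dots> = mv 3 (tau 3) w"
    using d assms(3)
    by (simp add: reflection_z_W_fixes reflection_W_in_vecs reflection_W_involutive
        tau_3_eq_reflection_matrix mv_reflection_matrix)
  finally show ?thesis
    using g by blast
qed

lemma mv_embedW:
  assumes "3 \<le> n"
  shows "mv n (embedW n g) x = (\<lambda>i. if i < 3 then mv 3 g x i else if i < n then x i else 0)"
proof (intro ext)
  fix i
  show "mv n (embedW n g) x i = (if i < 3 then mv 3 g x i else if i < n then x i else 0)"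
  proof (cases "i < 3")
    case True
    have "(\<Sum>j<n. embedW n g i j * x j) = (\<Sum>j<3. embedW n g i j * x j)"
      using assms True by (intro sum.mono_neutral_right) (auto simp: embedW_def)
    then show ?thesis
      using True assms by (simp add: mv_def embedW_def)
  next
    case False
    then show ?thesis
      by (simp add: mv_def embedW_def if_distrib[of "\<lambda>y. y * _"] cong: if_cong)
  qed
qed

lemma mv_embedW_cong:
  assumes "3 \<le> n" "mv 3 g x = mv 3 h x"
  shows "mv n (embedW n g) x = mv n (embedW n h) x"
  unfolding mv_embedW[OF assms(1)] assms(2) ..

lemma embedW_in_mats: "3 \<le> n \<Longrightarrow> embedW n g \<in> mats n"
  by (auto simp: embedW_def mats_def)

lemma embedW_mmul:
  assumes "3 \<le> n"
  shows "mmul n (embedW n g) (embedW n h) = embedW n (mmul 3 g h)"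
proof (rule mats_eqI[OF mmul_in_mats embedW_in_mats[OF assms]])
  fix x
  have inner: "mv 3 g (mv n (embedW n h) x) = mv 3 (mmul 3 g h) x"
    unfolding mv_mmul by (rule mv_cong) (simp add: mv_embedW[OF assms])
  show "mv n (mmul n (embedW n g) (embedW n h)) x = mv n (embedW n (mmul 3 g h)) x"
    unfolding mv_mmul mv_embedW[OF assms, of g] inner
    by (intro ext) (simp add: mv_embedW[OF assms] mv_mmul)
qed

lemma embedW_idm: "3 \<le> n \<Longrightarrow> embedW n (idm 3) = idm n"
  by (intro ext) (auto simp: embedW_def idm_def)

lemma tau_eq_embedW: "3 \<le> n \<Longrightarrow> tau n = embedW n (tau 3)"
  by (intro ext) (auto simp: embedW_def tau_def)

lemma embedW_hom:
  assumes "3 \<le> n"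
  shows "embedW n \<in> hom (OW m a b c) (GLn n)"
proof (rule homI)
  fix g assume "g \<in> carrier (OW m a b c)"
  then obtain h where "h \<in> mats 3" "mmul 3 g h = idm 3" "mmul 3 h g = idm 3"
    by (auto simp: OW_def GLn_def)
  then show "embedW n g \<in> carrier (GLn n)"
    using assms by (auto simp: GLn_def embedW_in_mats embedW_mmul embedW_idm
        intro!: bexI[of _ "embedW n h"])
qed (simp add: embedW_mmul assms)

lemma group_hom_embedW: "3 \<le> n \<Longrightarrow> group_hom (OW m a b c) (GLn n) (embedW n)"
  by (simp add: group_hom_def group_hom_axioms_def group_OW group_GLn embedW_hom)

lemma (in group) subgroup_normal_extension_by_involution:
  assumes N: "N \<lhd> G" and t: "t \<in> carrier G" "t \<otimes> t = \<one>"
  shows "subgroup {x \<in> carrier G. x \<in> N \<or> x \<otimes> t \<in> N} G"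
proof -
  interpret normal N G by (rule N)
  have inv_t: "inv t = t"
    using t inv_equality by blast
  have conj_t: "t \<otimes> h \<otimes> t \<in> N" if "h \<in> N" for h
    using inv_op_closed2[OF t(1) that] inv_t by simp
  show ?thesis
  proof (rule subgroupI)
    fix x y
    assume x: "x \<in> {x \<in> carrier G. x \<in> N \<or> x \<otimes> t \<in> N}"
      and y: "y \<in> {x \<in> carrier G. x \<in> N \<or> x \<otimes> t \<in> N}"
    consider "x \<in> N" "y \<in> N" | "x \<in> N" "y \<otimes> t \<in> N" | "x \<otimes> t \<in> N" "y \<in> N"
      | "x \<otimes> t \<in> N" "y \<otimes> t \<in> N"
      using x y by blast
    then show "x \<otimes> y \<in> {x \<in> carrier G. x \<in> N \<or> x \<otimes> t \<in> N}"
    proof cases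
      case 1
      then show ?thesis by simp
    next
      case 2
      then have "x \<otimes> (y \<otimes> t) \<in> N" by simp
      then show ?thesis using x y t by (simp add: m_assoc)
    next
      case 3
      then have "(x \<otimes> t) \<otimes> (t \<otimes> y \<otimes> t) \<in> N" using conj_t by simp
      then show ?thesis using x y t by (simp add: m_assoc) (simp flip: m_assoc)
    next
      case 4
      then have "(x \<otimes> t) \<otimes> (t \<otimes> (y \<otimes> t) \<otimes> t) \<in> N" using conj_t by simp
      then show ?thesis using x y t by (simp add: m_assoc) (simp flip: m_assoc)
    qed
  next
    fix x
    assume x: "x \<in> {x \<in> carrier G. x \<in> N \<or> x \<otimes> t \<in> N}"
    then consider "x \<in> N" | "x \<otimes> t \<in> N" by blast
    then show "inv x \<in> {x \<in> carrier G. x \<in> N \<or> x \<otimes> t \<in> N}"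
    proof cases
      case 1
      then show ?thesis using x by simp
    next
      case 2
      then have "inv (t \<otimes> (x \<otimes> t) \<otimes> t) \<in> N" using conj_t by simp
      then show ?thesis using x t inv_t by (simp add: inv_mult_group m_assoc)
    qed
  qed auto
qed

lemma orbit_on_eqI:
  assumes "B \<subseteq> A" "\<And>g. g \<in> A \<Longrightarrow> \<exists>h \<in> B. \<forall>p \<in> P. mv n g p = mv n h p"
  shows "orbit_on n A P = orbit_on n B P"
proof
  show "orbit_on n A P \<subseteq> orbit_on n B P"
  proof
    fix X assume "X \<in> orbit_on n A P"
    then obtain g where "g \<in> A" "X = mv n g ` P"
      by (auto simp: orbit_on_def)
    moreover obtain h where "h \<in> B" "\<forall>p \<in> P. mv n g p = mv n h p"
      using assms(2) \<open>g \<in> A\<close> by blast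
    ultimately show "X \<in> orbit_on n B P"
      unfolding orbit_on_def by (auto intro: image_cong)
  qed
qed (use assms(1) in \<open>auto simp: orbit_on_def\<close>)

lemma generate_tau_derived_subset:
  fixes a b c :: "'a::field" and n :: nat
  assumes n: "3 \<le> n"
  defines "D \<equiv> derived (OW n a b c) (carrier (OW n a b c))"
  shows "generate (GLn n) (insert (tau n) (embedW n ` D))
    \<subseteq> embedW n ` {x \<in> carrier (OW n a b c). x \<in> D \<or> mmul 3 x (tau 3) \<in> D}"
proof -
  interpret OW: group "OW n a b c" by (rule group_OW)
  interpret embedW: group_hom "OW n a b c" "GLn n" "embedW n" by (rule group_hom_embedW[OF n])
  define S where "S = {x \<in> carrier (OW n a b c). x \<in> D \<or> mmul 3 x (tau 3) \<in> D}"
  have D: "D \<lhd> OW n a b c"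
    unfolding D_def by (rule OW.derived_self_is_normal)
  have "subgroup S (OW n a b c)"
    using OW.subgroup_normal_extension_by_involution[OF D tau_3_in_OW[OF n]] tau_3_square
    unfolding S_def OW_mult OW_one by blast
  then have "subgroup (embedW n ` S) (GLn n)"
    by (rule embedW.subgroup_img_is_subgroup)
  moreover have "tau 3 \<in> S"
    using tau_3_in_OW[OF n] subgroup.one_closed[OF normal_imp_subgroup[OF D]]
      tau_3_square[where 'a = 'a]
    by (simp add: S_def)
  then have "insert (tau n) (embedW n ` D) \<subseteq> embedW n ` S"
    using subgroup.subset[OF normal_imp_subgroup[OF D]] unfolding tau_eq_embedW[OF n] S_def
    by blast
  ultimately show ?thesis
    unfolding S_def by (rule embedW.H.generate_subgroup_incl[rotated])
qed

lemma derived_coset_of_tau_acts_on_line: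
  fixes v :: "nat \<Rightarrow> 'a::field"
  assumes two: "(2::'a) \<noteq> 0" and n: "3 \<le> n"
    and x: "x \<in> carrier (OW n a b c)" "mmul 3 x (tau 3) \<in> derived (OW n a b c) (carrier (OW n a b c))"
  shows "\<exists>h \<in> derived (OW n a b c) (carrier (OW n a b c)).
    \<forall>s. mv n (embedW n x) (\<lambda>i. s * v i) = mv n (embedW n h) (\<lambda>i. s * v i)"
proof -
  let ?G = "OW n a b c" and ?D = "derived (OW n a b c) (carrier (OW n a b c))"
  interpret OW: group ?G by (rule group_OW)
  interpret embedW: group_hom ?G "GLn n" "embedW n" by (rule group_hom_embedW[OF n])
  have D: "subgroup ?D ?G"
    by (rule OW.derived_is_subgroup) simp
  define v3 where "v3 = (\<lambda>i. if i < 3 then v i else 0)"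
  obtain y where y: "y \<in> ?D" "mv 3 y v3 = mv 3 (tau 3) v3"
    using derived_OW_acts_as_tau[OF two n, where a = a and b = b and c = c and w = v3]
    by (auto simp: v3_def vecs_def)
  have "mv 3 M v = mv 3 M v3" for M :: "nat \<Rightarrow> nat \<Rightarrow> 'a"
    by (rule mv_cong) (simp add: v3_def)
  then have y_v: "mv 3 y v = mv 3 (tau 3) v"
    using y(2) by simp
  have T: "tau 3 \<in> carrier ?G" "x \<otimes>\<^bsub>?G\<^esub> tau 3 \<in> carrier ?G" "y \<in> carrier ?G"
    using tau_3_in_OW[OF n] OW.m_closed[OF x(1) tau_3_in_OW[OF n]] y(1) subgroup.subset[OF D]
    by auto
  have "x = x \<otimes>\<^bsub>?G\<^esub> tau 3 \<otimes>\<^bsub>?G\<^esub> tau 3"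
    using T x(1) tau_3_square by (metis OW.m_assoc OW.r_one OW_mult OW_one)
  then have "embedW n x = mmul n (embedW n (x \<otimes>\<^bsub>?G\<^esub> tau 3)) (embedW n (tau 3))"
    using embedW.hom_mult[OF T(2,1)] by simp
  then have "mv n (embedW n x) (\<lambda>i. s * v i)
      = mv n (embedW n (x \<otimes>\<^bsub>?G\<^esub> tau 3)) (mv n (embedW n y) (\<lambda>i. s * v i))" for s
    by (simp add: mv_mmul mv_scale mv_embedW_cong[OF n y_v])
  also have "\<dots> s = mv n (embedW n (x \<otimes>\<^bsub>?G\<^esub> tau 3 \<otimes>\<^bsub>?G\<^esub> y)) (\<lambda>i. s * v i)" for s
    using embedW.hom_mult[OF T(2,3)] by (simp add: mv_mmul)
  finally show ?thesis
    using subgroup.m_closed[OF D, of "x \<otimes>\<^bsub>?G\<^esub> tau 3" y] x(2) y(1) by auto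
qed

lemma orbit_on_line_eq:
  fixes v :: "nat \<Rightarrow> 'a::field" and a b c :: 'a and n :: nat
  assumes two: "(2::'a) \<noteq> 0" and n: "3 \<le> n"
  defines "B \<equiv> embedW n ` derived (OW n a b c) (carrier (OW n a b c))"
  shows "orbit_on n (generate (GLn n) (insert (tau n) B)) {(\<lambda>i. s * v i) | s. True}
    = orbit_on n B {(\<lambda>i. s * v i) | s. True}"
proof (rule orbit_on_eqI)
  show "B \<subseteq> generate (GLn n) (insert (tau n) B)"
    by (auto intro: generate.incl)
next
  fix g assume "g \<in> generate (GLn n) (insert (tau n) B)"
  then obtain x where "x \<in> carrier (OW n a b c)" "g = embedW n x"
    and "x \<in> derived (OW n a b c) (carrier (OW n a b c))
      \<or> mmul 3 x (tau 3) \<in> derived (OW n a b c) (carrier (OW n a b c))"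
    using generate_tau_derived_subset[OF n] unfolding B_def by blast
  then show "\<exists>h \<in> B. \<forall>p \<in> {(\<lambda>i. s * v i) | s. True}. mv n g p = mv n h p"
    using derived_coset_of_tau_acts_on_line[OF two n, of x a b c v] unfolding B_def by blast
qed

lemma two_neq_zero_if_odd_card:
  assumes "odd (card (UNIV :: 'a::{finite,field} set))"
  shows "(2::'a) \<noteq> 0"
proof
  assume "(2::'a) = 0"
  then have "CHAR('a) dvd 2"
    by (metis of_nat_eq_0_iff_char_dvd of_nat_numeral)
  moreover have "prime CHAR('a)"
    by (simp add: prime_CHAR_semidom finite_imp_CHAR_pos)
  ultimately have "CHAR('a) = 2"
    using primes_dvd_imp_eq two_is_prime_nat by blast
  then show False
    using CHAR_dvd_CARD[where 'a='a] assms by simp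
qed

theorem corollary3p6:
  fixes d :: nat and a b c :: "'a::{finite,field}"
  assumes "odd (card (UNIV :: 'a set))"
    and "d \<ge> 2"
    and "\<forall>v \<in> vecs (2*d+1). (\<forall>i. i \<noteq> 3 \<and> i \<noteq> 4 \<longrightarrow> v i = 0) \<and> (\<exists>i. v i \<noteq> 0)
           \<longrightarrow> beta (2*d+1) a b c v v \<noteq> 0"
  shows "let n = 2*d+1;
             B = embedW n ` derived (OW n a b c) (carrier (OW n a b c));
             A = generate (GLn n) (insert (tau n) B)
         in \<forall>P \<in> quadric_points n a b c. orbit_on n A P = orbit_on n B P"
  using orbit_on_line_eq[OF two_neq_zero_if_odd_card[OF assms(1)]] assms(2)
  by (auto simp: Let_def quadric_points_def)

end
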